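(* Let $G=(V,E)$ be a simple undirected graph and let $i\in V$ have degree $\delta$. Let $S$ be the induced star returned by the Simple Greedy algorithm (described in the context) started at $i$. Then Simple Greedy has approximation ratio $O(\delta)$: the star degree centrality $\mathcal{C}^s(i)$ satisfies $\mathcal{C}^s(i)/|N(S)| = O(\delta)$.
   Context: For $S\subseteq V$, $N(S)=\{j\in V\setminus S : (a,j)\in E \text{ for some } a\in S\}$ and $N[j]=N(\{j\})\cup\{j\}$. A set $S$ forms an induced star if $G[S]$ has exactly one node of degree $|S|-1$ (the center) and $|S|-1$ nodes of degree $1$. The star degree centrality of $i$ is $\mathcal{C}^s(i)=\max\{|N(S)| : S\subseteq V \text{ forms an induced star centered at } i\}$. Define $f_1(S,k)=|N(S\cup\{k\})|-|N(S)|$. Simple Greedy on input $i$: set $candidates\leftarrow N(i)$, $S\leftarrow\{i\}$. While $candidates\neq\emptyset$: remove from $candidates$ every $k$ with $f_1(S,k)\leq 0$; if $candidates\neq\emptyset$, pick $j\in\arg\max_{k\in candidates} f_1(S,k)$, set $S\leftarrow S\cup\{j\}$ and $candidates\leftarrow candidates\setminus N[j]$. Return $S$. *)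

theory Defs
  imports Complex_Main
begin

definition simple_graph :: "'a set \<Rightarrow> ('a \<times> 'a) set \<Rightarrow> bool" where
  "simple_graph V E \<longleftrightarrow> finite V \<and> E \<subseteq> V \<times> V \<and> sym E \<and> irrefl E"

definition nbhd :: "'a set \<Rightarrow> ('a \<times> 'a) set \<Rightarrow> 'a set \<Rightarrow> 'a set" where
  "nbhd V E S = {j \<in> V - S. \<exists>a\<in>S. (a, j) \<in> E}"

definition closed_nbhd :: "'a set \<Rightarrow> ('a \<times> 'a) set \<Rightarrow> 'a \<Rightarrow> 'a set" where
  "closed_nbhd V E j = nbhd V E {j} \<union> {j}"

definition induced_star :: "'a set \<Rightarrow> ('a \<times> 'a) set \<Rightarrow> 'a set \<Rightarrow> 'a \<Rightarrow> bool" where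
  "induced_star V E S c \<longleftrightarrow> S \<subseteq> V \<and> c \<in> S \<and>
     (\<forall>a \<in> S - {c}. (c, a) \<in> E) \<and> (\<forall>a \<in> S - {c}. \<forall>b \<in> S - {c}. (a, b) \<notin> E)"

definition star_centrality :: "'a set \<Rightarrow> ('a \<times> 'a) set \<Rightarrow> 'a \<Rightarrow> nat" where
  "star_centrality V E i = Max {card (nbhd V E S) | S. induced_star V E S i}"

definition f1 :: "'a set \<Rightarrow> ('a \<times> 'a) set \<Rightarrow> 'a set \<Rightarrow> 'a \<Rightarrow> int" where
  "f1 V E S k = int (card (nbhd V E (S \<union> {k}))) - int (card (nbhd V E S))"

text \<open>Reachable states (S, candidates) of Simple Greedy started at i. Ties in the argmax are
  resolved arbitrarily (nondeterministically).\<close>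
inductive greedy_reach :: "'a set \<Rightarrow> ('a \<times> 'a) set \<Rightarrow> 'a \<Rightarrow> 'a set \<times> 'a set \<Rightarrow> bool"
  for V E i where
  init: "greedy_reach V E i ({i}, nbhd V E {i})"
| stop: "\<lbrakk>greedy_reach V E i (S, C); C \<noteq> {}; {k \<in> C. f1 V E S k > 0} = {}\<rbrakk>
          \<Longrightarrow> greedy_reach V E i (S, {})"
| pick: "\<lbrakk>greedy_reach V E i (S, C); C \<noteq> {}; j \<in> {k \<in> C. f1 V E S k > 0};
          \<forall>k \<in> {k \<in> C. f1 V E S k > 0}. f1 V E S k \<le> f1 V E S j\<rbrakk>
          \<Longrightarrow> greedy_reach V E i (insert j S, {k \<in> C. f1 V E S k > 0} - closed_nbhd V E j)"

definition greedy_output :: "'a set \<Rightarrow> ('a \<times> 'a) set \<Rightarrow> 'a \<Rightarrow> 'a set \<Rightarrow> bool" where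
  "greedy_output V E i S \<longleftrightarrow> greedy_reach V E i (S, {})"

end

theory Submission
  imports Defs
begin

text \<open>For a neighbour k of i let g(k) be the number of neighbours of k outside N[i], and M the
  largest g(k). A star centred at i has at most \<open>\<delta>\<close> leaves, each contributing at most M
  new neighbours, so \<open>\<C>\<^sup>s(i) \<le> \<delta>(1 + M)\<close>. Greedy never shrinks N(S), so \<open>|N(S)| \<ge> \<delta>\<close>; and its
  first pick has gain \<open>g(k) - 1\<close>, so when \<open>M \<ge> 2\<close> it does move and reaches
  \<open>|N(S)| \<ge> \<delta> + M - 1\<close>. Together \<open>1 + M \<le> 2|N(S)|\<close>, giving ratio at most \<open>2\<delta>\<close>.\<close>

definition outer_nbhd :: "'a set \<Rightarrow> ('a \<times> 'a) set \<Rightarrow> 'a \<Rightarrow> 'a \<Rightarrow> 'a set" where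
  "outer_nbhd V E i k = nbhd V E {k} - closed_nbhd V E i"

text \<open>The \<open>insert 0\<close> keeps \<open>Max\<close> meaningful when i is isolated.\<close>
definition max_outer_degree :: "'a set \<Rightarrow> ('a \<times> 'a) set \<Rightarrow> 'a \<Rightarrow> nat" where
  "max_outer_degree V E i = Max (insert 0 ((\<lambda>k. card (outer_nbhd V E i k)) ` nbhd V E {i}))"

lemma finite_nbhd: "simple_graph V E \<Longrightarrow> finite (nbhd V E S)"
  unfolding simple_graph_def nbhd_def by auto

lemma card_outer_nbhd_le_max:
  "simple_graph V E \<Longrightarrow> k \<in> nbhd V E {i} \<Longrightarrow> card (outer_nbhd V E i k) \<le> max_outer_degree V E i"
  unfolding max_outer_degree_def by (rule Max_ge) (use finite_nbhd in auto)

lemma max_outer_degree_attained: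
  assumes "simple_graph V E" and "max_outer_degree V E i \<noteq> 0"
  obtains k where "k \<in> nbhd V E {i}" and "card (outer_nbhd V E i k) = max_outer_degree V E i"
proof -
  have "max_outer_degree V E i \<in> insert 0 ((\<lambda>k. card (outer_nbhd V E i k)) ` nbhd V E {i})"
    unfolding max_outer_degree_def by (rule Max_in) (use finite_nbhd[OF assms(1)] in auto)
  then show ?thesis using assms(2) that by auto
qed

lemma f1_first_pick:
  assumes sg: "simple_graph V E" and k: "k \<in> nbhd V E {i}"
  shows "f1 V E {i} k = int (card (outer_nbhd V E i k)) - 1"
proof -
  have split: "nbhd V E ({i} \<union> {k}) = (nbhd V E {i} - {k}) \<union> outer_nbhd V E i k"
    using k unfolding outer_nbhd_def nbhd_def closed_nbhd_def by auto
  have "(nbhd V E {i} - {k}) \<inter> outer_nbhd V E i k = {}"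
    unfolding outer_nbhd_def closed_nbhd_def by auto
  then have "card (nbhd V E ({i} \<union> {k})) = card (nbhd V E {i} - {k}) + card (outer_nbhd V E i k)"
    unfolding split using finite_nbhd[OF sg] by (simp add: card_Un_disjoint outer_nbhd_def)
  moreover have "card (nbhd V E {i} - {k}) + 1 = card (nbhd V E {i})"
    using k finite_nbhd[OF sg] by (metis Suc_eq_plus1 card_Suc_Diff1)
  ultimately show ?thesis unfolding f1_def by linarith
qed

lemma card_nbhd_induced_star_le:
  assumes sg: "simple_graph V E" and star: "induced_star V E T i"
  shows "card (nbhd V E T) \<le> card (nbhd V E {i}) * (1 + max_outer_degree V E i)"
proof -
  let ?d = "card (nbhd V E {i})" and ?M = "max_outer_degree V E i"
  have leaves: "T - {i} \<subseteq> nbhd V E {i}"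
    using star sg unfolding induced_star_def nbhd_def simple_graph_def irrefl_def by auto
  then have fin_leaves: "finite (T - {i})" using finite_nbhd[OF sg] finite_subset by blast
  have "nbhd V E T \<subseteq> nbhd V E {i} \<union> (\<Union>k\<in>T - {i}. outer_nbhd V E i k)"
    using star unfolding nbhd_def closed_nbhd_def outer_nbhd_def induced_star_def by auto
  then have "card (nbhd V E T) \<le> card (nbhd V E {i} \<union> (\<Union>k\<in>T - {i}. outer_nbhd V E i k))"
    by (rule card_mono[rotated]) (use finite_nbhd[OF sg] fin_leaves in \<open>auto simp: outer_nbhd_def\<close>)
  also have "\<dots> \<le> ?d + card (\<Union>k\<in>T - {i}. outer_nbhd V E i k)"
    by (rule card_Un_le)
  also have "card (\<Union>k\<in>T - {i}. outer_nbhd V E i k) \<le> (\<Sum>k\<in>T - {i}. card (outer_nbhd V E i k))"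
    by (rule card_UN_le[OF fin_leaves])
  also have "\<dots> \<le> card (T - {i}) * ?M"
    using sum_mono[of "T - {i}" "\<lambda>k. card (outer_nbhd V E i k)" "\<lambda>_. ?M"]
      card_outer_nbhd_le_max[OF sg] leaves by auto
  also have "\<dots> \<le> ?d * ?M"
    using card_mono[OF finite_nbhd[OF sg] leaves] by simp
  finally show ?thesis by (simp add: algebra_simps)
qed

lemma star_centrality_attained:
  assumes "simple_graph V E" and "i \<in> V"
  obtains T where "induced_star V E T i" and "star_centrality V E i = card (nbhd V E T)"
proof -
  let ?A = "{card (nbhd V E T) | T. induced_star V E T i}"
  have "?A \<subseteq> (\<lambda>T. card (nbhd V E T)) ` Pow V" unfolding induced_star_def by auto
  then have "finite ?A"
    using assms(1) unfolding simple_graph_def by (meson finite_Pow_iff finite_imageI finite_subset)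
  moreover have "induced_star V E {i} i" using assms(2) unfolding induced_star_def by auto
  then have "?A \<noteq> {}" by blast
  ultimately have "star_centrality V E i \<in> ?A"
    unfolding star_centrality_def by (rule Max_in)
  then show ?thesis using that by auto
qed

lemma greedy_reach_card_nbhd_mono:
  "greedy_reach V E i st \<Longrightarrow> card (nbhd V E {i}) \<le> card (nbhd V E (fst st))"
  by (induction rule: greedy_reach.induct) (auto simp: f1_def)

lemma greedy_reach_first_pick:
  assumes reach: "greedy_reach V E i st" and sg: "simple_graph V E"
    and M: "2 \<le> max_outer_degree V E i"
  shows "st = ({i}, nbhd V E {i}) \<or>
    card (nbhd V E {i}) + max_outer_degree V E i \<le> card (nbhd V E (fst st)) + 1"
  using reach
proof induction
  case init
  then show ?case by simp
next
  case (stop S C)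
  show ?case
  proof (cases "(S, C) = ({i}, nbhd V E {i})")
    case True
    obtain k where "k \<in> nbhd V E {i}" "card (outer_nbhd V E i k) = max_outer_degree V E i"
      by (rule max_outer_degree_attained[OF sg]) (use M in auto)
    then have "k \<in> {k \<in> C. f1 V E S k > 0}" using True f1_first_pick[OF sg] M by auto
    with stop.hyps(3) show ?thesis by blast
  next
    case False
    then show ?thesis using stop.IH by auto
  qed
next
  case (pick S C j)
  have grows: "card (nbhd V E S) < card (nbhd V E (insert j S))"
    using pick.hyps(3) unfolding f1_def by auto
  show ?case
  proof (cases "(S, C) = ({i}, nbhd V E {i})")
    case True
    obtain k where k: "k \<in> nbhd V E {i}" "card (outer_nbhd V E i k) = max_outer_degree V E i"
      by (rule max_outer_degree_attained[OF sg]) (use M in auto)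
    have "0 < f1 V E S k" using True f1_first_pick[OF sg k(1)] k(2) M by simp
    then have "f1 V E S k \<le> f1 V E S j" using pick.hyps(4) True k(1) by blast
    then have "card (nbhd V E {i}) + max_outer_degree V E i \<le> card (nbhd V E (insert j S)) + 1"
      using True f1_first_pick[OF sg k(1)] k(2) by (simp add: f1_def)
    then show ?thesis by simp
  next
    case False
    then show ?thesis using pick.IH grows by auto
  qed
qed

lemma greedy_output_card_nbhd_ge:
  assumes sg: "simple_graph V E" and out: "greedy_output V E i S" and "nbhd V E {i} \<noteq> {}"
  shows "1 + max_outer_degree V E i \<le> 2 * card (nbhd V E S)"
proof -
  have reach: "greedy_reach V E i (S, {})" using out unfolding greedy_output_def .
  have "1 \<le> card (nbhd V E {i})" using assms(3) finite_nbhd[OF sg] by (simp add: Suc_le_eq card_gt_0_iff)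
  moreover have "card (nbhd V E {i}) \<le> card (nbhd V E S)"
    using greedy_reach_card_nbhd_mono[OF reach] by simp
  moreover have "card (nbhd V E {i}) + max_outer_degree V E i \<le> card (nbhd V E S) + 1"
    if "2 \<le> max_outer_degree V E i"
    using greedy_reach_first_pick[OF reach sg that] assms(3) by (simp add: eq_commute[of "{}"])
  ultimately show ?thesis by linarith
qed

lemma star_centrality_le_greedy:
  assumes sg: "simple_graph V E" and "i \<in> V" and out: "greedy_output V E i S"
  shows "star_centrality V E i \<le> 2 * card (nbhd V E {i}) * card (nbhd V E S)"
proof -
  obtain T where T: "induced_star V E T i" "star_centrality V E i = card (nbhd V E T)"
    using star_centrality_attained[OF sg \<open>i \<in> V\<close>] .
  have "star_centrality V E i \<le> card (nbhd V E {i}) * (1 + max_outer_degree V E i)"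
    using card_nbhd_induced_star_le[OF sg T(1)] T(2) by simp
  also have "\<dots> \<le> card (nbhd V E {i}) * (2 * card (nbhd V E S))"
  proof (cases "nbhd V E {i} = {}")
    case False
    then show ?thesis by (rule mult_le_mono2[OF greedy_output_card_nbhd_ge[OF sg out]])
  qed simp
  finally show ?thesis by (simp add: mult.assoc mult.left_commute)
qed

theorem theorem3:
  shows "\<exists>c::real. \<forall>(V::nat set) E i S.
           simple_graph V E \<and> i \<in> V \<and> greedy_output V E i S \<longrightarrow>
           real (star_centrality V E i) \<le> c * real (card (nbhd V E {i})) * real (card (nbhd V E S))"
proof (intro exI[of _ 2] allI impI)
  fix V :: "nat set" and E i S
  assume "simple_graph V E \<and> i \<in> V \<and> greedy_output V E i S"
  then have "star_centrality V E i \<le> 2 * card (nbhd V E {i}) * card (nbhd V E S)"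
    using star_centrality_le_greedy[of V E i S] by blast
  then have "real (star_centrality V E i) \<le> real (2 * card (nbhd V E {i}) * card (nbhd V E S))"
    by (simp only: of_nat_le_iff)
  then show "real (star_centrality V E i) \<le> 2 * real (card (nbhd V E {i})) * real (card (nbhd V E S))"
    by (simp only: of_nat_mult of_nat_numeral)
qed

end
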